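(* Let $(d(t),\,t\ge0)$ be a nonnegative, locally integrable, weakly decreasing demand function, and fix an initial energy configuration $(E_i(0),\,i\in\mathcal S)$. If there is a cross-charging policy that completely serves $d$ on $[0,\infty)$, then $d$ is also completely served on $[0,\infty)$ without cross-charging (i.e. with $r_i(t)\ge0$ for all $i,t$), namely by the GGDDF policy.
   Context: A finite set $\mathcal S$ of energy stores is given. Store $i\in\mathcal S$ has capacity $\overline E_i>0$, maximum discharge rate $P_i>0$, maximum charge rate $P'_i\ge0$ and round-trip efficiency $\eta_i\in(0,1]$. A cross-charging policy is a choice of measurable rate functions $(r_i(t),\,t\ge0)$ with $E_i(t)=E_i(0)-\int_0^t r_i(u)\,du$, subject to $0\le E_i(t)\le\overline E_i$, $-P'_i\le r_i(t)\le P_i$, and $$0\le\sum_{i:\,r_i(t)\ge0}r_i(t)+\sum_{i:\,r_i(t)<0}r_i(t)/\eta_i\le d(t)\quad\text{for all }t\ge0$$ (negative $r_i$ means store $i$ is charged, drawing energy at rate $-r_i/\eta_i$ from other stores; no external energy is available). It completely serves $d$ on an interval $I$ if the middle expression equals $d(t)$ for almost every $t\in I$. A policy with all $r_i(t)\ge0$ is one without cross-charging. GGDDF (greedy greatest-discharge-duration-first) policy: at (almost) every time $t$, the total served rate is $\bar d(t)=\min\bigl(d(t),\sum_{i:E_i(t)>0}P_i\bigr)$, and it is allocated as follows: the nonempty stores are partitioned into groups $G_1,G_2,\dots$ of equal discharge-duration $E_i(t)/P_i$, listed in strictly decreasing order of that duration; letting $m$ be the least index with $\sum_{k\le m}\sum_{i\in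 G_k}P_i\ge\bar d(t)$, every store in $G_k$ with $k<m$ discharges at rate $P_i$, every store $i\in G_m$ discharges at rate $\lambda P_i$ with $\lambda\in(0,1]$ chosen so that $\sum_i r_i(t)=\bar d(t)$, and all other stores have rate $0$ (all rates are $0$ if $\bar d(t)=0$). *)

theory Defs
  imports "HOL-Analysis.Analysis"
begin

definition energy :: "('i \<Rightarrow> real) \<Rightarrow> ('i \<Rightarrow> real \<Rightarrow> real) \<Rightarrow> 'i \<Rightarrow> real \<Rightarrow> real" where
  "energy E0 r i t = E0 i - integral {0..t} (r i)"

definition served_rate :: "'i set \<Rightarrow> ('i \<Rightarrow> real) \<Rightarrow> ('i \<Rightarrow> real \<Rightarrow> real) \<Rightarrow> real \<Rightarrow> real" where
  "served_rate S eta r t =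
     (\<Sum>i\<in>{i\<in>S. r i t \<ge> 0}. r i t) + (\<Sum>i\<in>{i\<in>S. r i t < 0}. r i t / eta i)"

text \<open>Cross-charging policy (feasible policy) for stores S with capacities cap, max discharge
  rates P, max charge rates P', efficiencies eta, initial energies E0 and demand d.\<close>
definition cc_policy ::
  "'i set \<Rightarrow> ('i \<Rightarrow> real) \<Rightarrow> ('i \<Rightarrow> real) \<Rightarrow> ('i \<Rightarrow> real) \<Rightarrow> ('i \<Rightarrow> real) \<Rightarrow>
   ('i \<Rightarrow> real) \<Rightarrow> (real \<Rightarrow> real) \<Rightarrow> ('i \<Rightarrow> real \<Rightarrow> real) \<Rightarrow> bool" where
  "cc_policy S cap P P' eta E0 d r \<longleftrightarrow>
     (\<forall>i\<in>S. set_borel_measurable lborel {0..} (r i)) \<and>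
     (\<forall>i\<in>S. \<forall>t\<ge>0. 0 \<le> energy E0 r i t \<and> energy E0 r i t \<le> cap i \<and>
                     - P' i \<le> r i t \<and> r i t \<le> P i) \<and>
     (\<forall>t\<ge>0. 0 \<le> served_rate S eta r t \<and> served_rate S eta r t \<le> d t)"

definition completely_serves :: "'i set \<Rightarrow> ('i \<Rightarrow> real) \<Rightarrow> (real \<Rightarrow> real) \<Rightarrow> ('i \<Rightarrow> real \<Rightarrow> real) \<Rightarrow> bool" where
  "completely_serves S eta d r \<longleftrightarrow> (AE t in lborel. t \<ge> 0 \<longrightarrow> served_rate S eta r t = d t)"

definition no_cross_charging :: "'i set \<Rightarrow> ('i \<Rightarrow> real \<Rightarrow> real) \<Rightarrow> bool" where
  "no_cross_charging S r \<longleftrightarrow> (\<forall>i\<in>S. \<forall>t\<ge>0. r i t \<ge> 0)"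

text \<open>Groups = stores of N with equal duration; the group G_m is the one of duration tau,
  the largest duration value whose cumulative discharge capacity (over all groups of
  duration \<ge> tau, i.e. G_1..G_m) reaches dbar.\<close>
definition ggddf_at ::
  "'i set \<Rightarrow> ('i \<Rightarrow> real) \<Rightarrow> (real \<Rightarrow> real) \<Rightarrow> ('i \<Rightarrow> real \<Rightarrow> real) \<Rightarrow> ('i \<Rightarrow> real \<Rightarrow> real) \<Rightarrow> real \<Rightarrow> bool" where
  "ggddf_at S P d E r t \<longleftrightarrow>
     (let N = {i\<in>S. E i t > 0};
          dbar = min (d t) (\<Sum>i\<in>N. P i);
          dur = (\<lambda>i. E i t / P i);
          cum = (\<lambda>\<tau>. \<Sum>i\<in>{i\<in>N. dur i \<ge> \<tau>}. P i)
      in (dbar = 0 \<longrightarrow> (\<forall>i\<in>S. r i t = 0)) \<and>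
         (dbar \<noteq> 0 \<longrightarrow>
            (\<exists>\<tau>\<in>dur ` N. \<exists>lam::real.
               cum \<tau> \<ge> dbar \<and> (\<forall>\<tau>'\<in>dur ` N. \<tau>' > \<tau> \<longrightarrow> cum \<tau>' < dbar) \<and>
               0 < lam \<and> lam \<le> 1 \<and>
               (\<forall>i\<in>S. r i t = (if i \<in> N \<and> dur i > \<tau> then P i
                               else if i \<in> N \<and> dur i = \<tau> then lam * P i else 0)) \<and>
               (\<Sum>i\<in>S. r i t) = dbar)))"

definition is_ggddf :: "'i set \<Rightarrow> ('i \<Rightarrow> real) \<Rightarrow> ('i \<Rightarrow> real) \<Rightarrow> (real \<Rightarrow> real) \<Rightarrow> ('i \<Rightarrow> real \<Rightarrow> real) \<Rightarrow> bool" where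
  "is_ggddf S P E0 d r \<longleftrightarrow> (AE t in lborel. t \<ge> 0 \<longrightarrow> ggddf_at S P d (energy E0 r) r t)"

end

theory Submission
  imports Defs
begin

text \<open>GGDDF is constructed phase by phase. Between two events (two distinct discharge durations
  meet, or a nonempty store empties) the ranking of the stores by duration is frozen, so the
  GGDDF rate of each store depends on time only through the weakly decreasing demand; this makes
  the durations continuous and the rates measurable, and since every event merges two of finitely
  many duration values, the phases exhaust \<open>[0,\<infinity>)\<close>. In particular the ranking of the durations
  is never reversed.

  If GGDDF falls short of the demand at time \<open>T\<close>, the stores still nonempty at \<open>T\<close> have total
  power below \<open>d T \<le> d s\<close> for every \<open>s \<le> T\<close>, and at time \<open>s\<close> any store ranked at least as high
  as one of them is one of them; so each of them has discharged at full rate on \<open>[0,T]\<close>, while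
  the others have emptied.
  GGDDF has then delivered \<open>\<Sum>\<^sub>i min (E\<^sub>i(0)) (P\<^sub>i T)\<close>, which bounds the energy any cross-charging
  policy can deliver by time \<open>T\<close>, since charging only loses energy. As GGDDF never serves more than
  the demand, it serves it almost everywhere on \<open>[0,T]\<close>; countably many such \<open>T\<close> suffice.\<close>

section \<open>Integrals of bounded functions and almost-everywhere properties\<close>

lemma integral_atLeastAtMost_trivial: "t \<le> s \<Longrightarrow> integral {s..t} (f :: real \<Rightarrow> real) = 0"
  by (cases "t = s") auto

lemma integral_unit_valued_bounds:
  fixes f :: "real \<Rightarrow> real"
  assumes "f integrable_on {a..b}" "a \<le> b" "\<And>u. u \<in> {a..b} \<Longrightarrow> 0 \<le> f u \<and> f u \<le> 1"
  shows "0 \<le> integral {a..b} f" "integral {a..b} f \<le> b - a"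
proof -
  show "0 \<le> integral {a..b} f" using assms by (intro integral_nonneg) auto
  have "integral {a..b} f \<le> integral {a..b} (\<lambda>x. 1)"
    using assms by (intro integral_le) auto
  then show "integral {a..b} f \<le> b - a" using assms by simp
qed

lemma indefinite_integral_unit_valued_lipschitz:
  fixes f :: "real \<Rightarrow> real"
  assumes int: "\<And>b. f integrable_on {s..b}" and bd: "\<And>u. s \<le> u \<Longrightarrow> 0 \<le> f u \<and> f u \<le> 1"
    and "t \<le> t'"
  shows "\<bar>integral {s..t'} f - integral {s..t} f\<bar> \<le> t' - t"
proof (cases "t \<le> s")
  case True
  then show ?thesis
    using integral_unit_valued_bounds[OF int, of "max s t'"] bd \<open>t \<le> t'\<close>
    by (cases "t' \<le> s") (auto simp: integral_atLeastAtMost_trivial max_def)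
next
  case False
  have "f integrable_on {t..t'}" using integrable_subinterval_real[OF int[of t']] False by auto
  then have "0 \<le> integral {t..t'} f" "integral {t..t'} f \<le> t' - t"
    using integral_unit_valued_bounds[of f t t'] \<open>t \<le> t'\<close> bd False by auto
  moreover have "integral {s..t} f + integral {t..t'} f = integral {s..t'} f"
    using Henstock_Kurzweil_Integration.integral_combine[of s t t' f] False \<open>t \<le> t'\<close> int[of t'] by auto
  ultimately show ?thesis by simp
qed

lemma continuous_on_indefinite_integral_unit_valued:
  fixes f :: "real \<Rightarrow> real"
  assumes "\<And>b. f integrable_on {s..b}" "\<And>u. s \<le> u \<Longrightarrow> 0 \<le> f u \<and> f u \<le> 1"
  shows "continuous_on A (\<lambda>t. integral {s..t} f)"
proof -
  have "\<bar>integral {s..t'} f - integral {s..t} f\<bar> \<le> \<bar>t' - t\<bar>" for t t'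
    using indefinite_integral_unit_valued_lipschitz[OF assms, of t t']
      indefinite_integral_unit_valued_lipschitz[OF assms, of t' t]
    by (cases "t \<le> t'") (auto simp: abs_minus_commute)
  then show ?thesis unfolding continuous_on_iff
    by (metis dist_real_def order_le_less_trans)
qed

lemma continuous_first_zero:
  fixes g :: "real \<Rightarrow> real"
  assumes "continuous_on UNIV g" "0 < g s" "g t \<le> 0" "s \<le> t"
  shows "\<exists>u. s \<le> u \<and> u \<le> t \<and> g u = 0 \<and> (g t < 0 \<longrightarrow> u < t)"
proof -
  obtain u where "s \<le> u" "u \<le> t" "g u = 0"
    using IVT2'[of g t 0 s] assms continuous_on_subset by fastforce
  then show ?thesis by (metis less_le)
qed

lemma set_borel_measurable_bounded_integrable_on:
  fixes f :: "real \<Rightarrow> real"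
  assumes m: "set_borel_measurable lborel {0..} f" and b: "\<And>t. 0 \<le> t \<Longrightarrow> \<bar>f t\<bar> \<le> c"
  shows "f integrable_on {0..T}"
proof -
  define g where "g x = indicator {0..} x *\<^sub>R f x" for x :: real
  have "g \<in> borel_measurable lborel" using m unfolding set_borel_measurable_def g_def by simp
  then have "g \<in> borel_measurable (lebesgue_on {0..T})"
    by (intro measurable_restrict_space1 measurable_completion)
  then have "g integrable_on {0..T}"
    by (rule measurable_bounded_by_integrable_imp_integrable_real[of _ _ "\<lambda>_. c"])
       (use b in \<open>auto simp: g_def\<close>)
  then show ?thesis by (rule integrable_eq) (auto simp: g_def)
qed

lemma AE_lborel_negligible_exceptions:
  "AE x in lborel. Q x \<Longrightarrow> \<exists>N. negligible N \<and> {x. \<not> Q x} \<subseteq> N"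
  using AE_completion[of Q lborel] eventually_ae_filter_negligible by blast

lemma AE_eq_0_if_integral_nonneg_eq_0:
  fixes h :: "real \<Rightarrow> real"
  assumes h: "h integrable_on {a..b}" and nonneg: "\<And>x. x \<in> {a..b} \<Longrightarrow> 0 \<le> h x"
    and "integral {a..b} h = 0"
  shows "AE x in lborel. x \<in> {a..b} \<longrightarrow> h x = 0"
proof -
  have abs_int: "h absolutely_integrable_on {a..b}"
    by (rule absolutely_integrable_onI[OF h]) (rule integrable_eq[OF h], use nonneg in auto)
  then have "set_lebesgue_integral lebesgue {a..b} h = 0"
    using set_lebesgue_integral_eq_integral(2)[OF abs_int] assms(3) by simp
  then have "AE x in lebesgue. indicator {a..b} x *\<^sub>R h x = 0"
    unfolding set_lebesgue_integral_def
    by (subst (asm) integral_nonneg_eq_0_iff_AE)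
       (use abs_int nonneg in \<open>auto simp: set_integrable_def indicator_def\<close>)
  then have "AE x in lebesgue. x \<in> {a..b} \<longrightarrow> h x = 0"
    by eventually_elim (auto simp: indicator_def)
  then show ?thesis by (simp add: AE_completion_iff)
qed

lemma AE_on_union_of_initial_intervals:
  fixes F :: "real set"
  assumes "bdd_above F" "\<And>T. T \<in> F \<Longrightarrow> AE t in lborel. t \<in> {0..T} \<longrightarrow> Q t"
  shows "AE t in lborel. (\<exists>T\<in>F. t \<in> {0..T}) \<longrightarrow> Q t"
proof (cases "F = {}")
  case False
  have "\<exists>T\<in>F. Sup F - inverse (real (Suc m)) < T" for m
    by (rule less_cSupE[OF _ False]) auto
  then obtain T where T: "\<And>m. T m \<in> F" "\<And>m. Sup F - inverse (real (Suc m)) < T m"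
    by metis
  have "AE t in lborel. \<forall>m. t \<in> {0..T m} \<longrightarrow> Q t"
    unfolding AE_all_countable using T(1) assms(2) by blast
  moreover have "AE t in lborel. t \<noteq> Sup F" by (rule AE_lborel_singleton)
  ultimately show ?thesis
  proof eventually_elim
    case (elim t)
    show ?case
    proof
      assume "\<exists>T\<in>F. t \<in> {0..T}"
      then have "0 \<le> t" "t < Sup F"
        using cSup_upper[OF _ assms(1)] elim by (force intro: order.strict_trans2)+
      then obtain m where "inverse (real (Suc m)) < Sup F - t"
        using reals_Archimedean by (metis diff_gt_0_iff_gt)
      then have "t \<le> T m" using T(2)[of m] by simp
      then show "Q t" using elim \<open>0 \<le> t\<close> by auto
    qed
  qed
qed simp

lemma AE_nonneg_reals_from_exceptional_times:
  fixes F :: "real set"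
  assumes "\<And>T. T \<in> F \<Longrightarrow> AE t in lborel. t \<in> {0..T} \<longrightarrow> Q t"
    and "\<And>t. 0 \<le> t \<Longrightarrow> t \<notin> F \<Longrightarrow> Q t"
  shows "AE t in lborel. 0 \<le> t \<longrightarrow> Q t"
proof -
  have "AE t in lborel. \<forall>n::nat. (\<exists>T\<in>F \<inter> {..real n}. t \<in> {0..T}) \<longrightarrow> Q t"
    unfolding AE_all_countable using assms(1) by (intro allI AE_on_union_of_initial_intervals) auto
  then show ?thesis
  proof eventually_elim
    case (elim t)
    show ?case
    proof
      assume "0 \<le> t"
      obtain n :: nat where "t \<le> real n" using real_arch_simple by blast
      then show "Q t" using elim assms(2) \<open>0 \<le> t\<close> by (cases "t \<in> F") auto
    qed
  qed
qed

section \<open>The energy a cross-charging policy can deliver\<close>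

lemma served_rate_no_charging:
  assumes "\<And>i. i \<in> S \<Longrightarrow> 0 \<le> r i t"
  shows "served_rate S eta r t = (\<Sum>i\<in>S. r i t)"
proof -
  have "{i\<in>S. r i t < 0} = {}" "{i\<in>S. r i t \<ge> 0} = S" using assms by (auto simp: not_less)
  then show ?thesis unfolding served_rate_def by (simp only:) simp
qed

lemma served_rate_le_sum:
  assumes "finite S" "\<And>i. i \<in> S \<Longrightarrow> 0 < eta i \<and> eta i \<le> 1"
  shows "served_rate S eta r t \<le> (\<Sum>i\<in>S. r i t)"
proof -
  have "(\<Sum>i\<in>S. r i t) = (\<Sum>i\<in>{i\<in>S. r i t \<ge> 0}. r i t) + (\<Sum>i\<in>{i\<in>S. r i t < 0}. r i t)"
    using assms(1) by (subst sum.union_disjoint[symmetric]) (auto intro: sum.cong)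
  moreover have "(\<Sum>i\<in>{i\<in>S. r i t < 0}. r i t / eta i) \<le> (\<Sum>i\<in>{i\<in>S. r i t < 0}. r i t)"
  proof (rule sum_mono)
    fix i assume i: "i \<in> {i\<in>S. r i t < 0}"
    then have "r i t \<le> r i t * eta i" using assms(2) by (simp add: mult_le_cancel_left1)
    then show "r i t / eta i \<le> r i t" using i assms(2) by (simp add: divide_le_eq)
  qed
  ultimately show ?thesis unfolding served_rate_def by simp
qed

lemma cc_policy_initial_energy:
  assumes "cc_policy S cap P P' eta E0 d r" "i \<in> S"
  shows "0 \<le> E0 i \<and> E0 i \<le> cap i"
  using assms unfolding cc_policy_def energy_def by force

text \<open>Charging only loses energy, so no policy delivers more than the stores can discharge.\<close>
lemma cc_policy_delivered_bound:
  assumes "finite S"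
    and params: "\<forall>i\<in>S. 0 < eta i \<and> eta i \<le> 1"
    and cc: "cc_policy S cap P P' eta E0 d r" and serves: "completely_serves S eta d r"
    and "d integrable_on {0..T}" "0 \<le> T"
  shows "integral {0..T} d \<le> (\<Sum>i\<in>S. min (E0 i) (P i * T))"
proof -
  have r_int: "r i integrable_on {0..T}" if "i \<in> S" for i
  proof (rule set_borel_measurable_bounded_integrable_on)
    show "set_borel_measurable lborel {0..} (r i)" using cc that by (simp add: cc_policy_def)
    show "\<bar>r i t\<bar> \<le> max (P i) (P' i)" if "0 \<le> t" for t
      using cc \<open>i \<in> S\<close> that unfolding cc_policy_def
      by (metis abs_le_iff max.coboundedI1 max.coboundedI2 minus_le_iff)
  qed
  have r_bound: "integral {0..T} (r i) \<le> min (E0 i) (P i * T)" if "i \<in> S" for i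
  proof -
    have "0 \<le> energy E0 r i T" using cc that \<open>0 \<le> T\<close> by (simp add: cc_policy_def)
    moreover have "integral {0..T} (r i) \<le> integral {0..T} (\<lambda>_. P i)"
      by (rule integral_le[OF r_int[OF that]]) (use cc that in \<open>auto simp: cc_policy_def\<close>)
    ultimately show ?thesis using \<open>0 \<le> T\<close> by (simp add: energy_def mult.commute)
  qed
  obtain N where N: "negligible N" "{t. \<not> (0 \<le> t \<longrightarrow> served_rate S eta r t = d t)} \<subseteq> N"
    using AE_lborel_negligible_exceptions serves unfolding completely_serves_def by blast
  have "((\<lambda>t. served_rate S eta r t) has_integral integral {0..T} d) {0..T}"
    by (rule has_integral_spike[OF N(1) _ integrable_integral]) (use N(2) assms(5) in auto)
  moreover have "((\<lambda>t. \<Sum>i\<in>S. r i t) has_integral (\<Sum>i\<in>S. integral {0..T} (r i))) {0..T}"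
    using r_int by (intro has_integral_sum \<open>finite S\<close>) blast
  ultimately have "integral {0..T} d \<le> (\<Sum>i\<in>S. integral {0..T} (r i))"
    by (rule has_integral_le) (use served_rate_le_sum[OF \<open>finite S\<close>] params in auto)
  also have "\<dots> \<le> (\<Sum>i\<in>S. min (E0 i) (P i * T))" by (intro sum_mono r_bound)
  finally show ?thesis .
qed

section \<open>The GGDDF allocation\<close>

locale ggddf_setting =
  fixes S :: "'i set" and P :: "'i \<Rightarrow> real" and d :: "real \<Rightarrow> real"
  assumes finite_stores: "finite S" and P_pos: "\<And>i. i \<in> S \<Longrightarrow> 0 < P i"
    and d_nonneg: "\<And>t. 0 \<le> t \<Longrightarrow> 0 \<le> d t"
    and d_antimono: "\<And>s t. 0 \<le> s \<Longrightarrow> s \<le> t \<Longrightarrow> d t \<le> d s"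
begin

text \<open>Throughout, \<open>y :: 'i \<Rightarrow> real\<close> is a vector of discharge durations \<open>E\<^sub>i/P\<^sub>i\<close>.\<close>

definition power_above :: "('i \<Rightarrow> real) \<Rightarrow> real \<Rightarrow> real" where
  "power_above y v = (\<Sum>j\<in>{j\<in>S. v < y j}. P j)"

definition power_at :: "('i \<Rightarrow> real) \<Rightarrow> real \<Rightarrow> real" where
  "power_at y v = (\<Sum>j\<in>{j\<in>S. y j = v}. P j)"

definition power_from :: "('i \<Rightarrow> real) \<Rightarrow> real \<Rightarrow> real" where
  "power_from y v = (\<Sum>j\<in>{j\<in>S. 0 < y j \<and> v \<le> y j}. P j)"

definition power_nonempty :: "('i \<Rightarrow> real) \<Rightarrow> real" where
  "power_nonempty y = (\<Sum>j\<in>{j\<in>S. 0 < y j}. P j)"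

text \<open>Serving the total rate \<open>D\<close> greedily by decreasing duration, a nonempty store of duration \<open>v\<close>
  discharges at this fraction of its maximal rate: \<open>1\<close> if the stores of larger duration cannot
  serve \<open>D\<close> alone, and \<open>0\<close> once the stores of duration at least \<open>v\<close> can.\<close>
definition discharge_fraction :: "('i \<Rightarrow> real) \<Rightarrow> real \<Rightarrow> real \<Rightarrow> real" where
  "discharge_fraction y D v =
     (if 0 < v then max 0 (min 1 ((D - power_above y v) / power_at y v)) else 0)"

definition served_level :: "('i \<Rightarrow> real) \<Rightarrow> real \<Rightarrow> real" where
  "served_level y t = min (d t) (power_nonempty y)"

lemma sum_P_nonneg: "A \<subseteq> S \<Longrightarrow> 0 \<le> (\<Sum>j\<in>A. P j)"
  using P_pos by (intro sum_nonneg) (auto simp: less_imp_le)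

lemma sum_P_mono: "A \<subseteq> B \<Longrightarrow> B \<subseteq> S \<Longrightarrow> (\<Sum>j\<in>A. P j) \<le> (\<Sum>j\<in>B. P j)"
  using P_pos finite_stores by (intro sum_mono2) (auto intro: finite_subset less_imp_le)

lemma power_above_nonneg: "0 \<le> power_above y v"
  unfolding power_above_def by (rule sum_P_nonneg) auto

lemma power_at_nonneg: "0 \<le> power_at y v"
  unfolding power_at_def by (rule sum_P_nonneg) auto

lemma power_at_pos:
  assumes "i \<in> S"
  shows "0 < power_at y (y i)"
proof -
  have "P i \<le> power_at y (y i)"
    unfolding power_at_def using assms P_pos finite_stores
    by (intro member_le_sum) (auto intro: less_imp_le)
  then show ?thesis using P_pos[OF assms] by linarith
qed

lemma power_nonempty_nonneg: "0 \<le> power_nonempty y"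
  unfolding power_nonempty_def by (rule sum_P_nonneg) auto

lemma power_from_eq: "0 < v \<Longrightarrow> power_from y v = power_above y v + power_at y v"
  unfolding power_from_def power_above_def power_at_def
  by (subst sum.union_disjoint[symmetric]) (use finite_stores in \<open>auto intro!: sum.cong\<close>)

lemma discharge_fraction_bounds: "0 \<le> discharge_fraction y D v" "discharge_fraction y D v \<le> 1"
  by (auto simp: discharge_fraction_def)

lemma discharge_fraction_zero_level:
  assumes "i \<in> S" "D \<le> 0"
  shows "discharge_fraction y D (y i) = 0"
proof -
  have "(D - power_above y (y i)) / power_at y (y i) \<le> 0"
    using power_at_pos[OF assms(1)] power_above_nonneg[of y "y i"] assms(2)
    by (simp add: divide_nonpos_pos)
  then show ?thesis by (simp add: discharge_fraction_def)
qed

definition threshold :: "('i \<Rightarrow> real) \<Rightarrow> real \<Rightarrow> real" where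
  "threshold y D = Max {v \<in> y ` {j\<in>S. 0 < y j}. D \<le> power_from y v}"

context
  fixes y :: "'i \<Rightarrow> real" and D :: real
  assumes D_pos: "0 < D" and D_le: "D \<le> power_nonempty y"
begin

lemma threshold_mem: "threshold y D \<in> {v \<in> y ` {j\<in>S. 0 < y j}. D \<le> power_from y v}"
proof -
  have "{j\<in>S. 0 < y j} \<noteq> {}"
    using D_pos D_le unfolding power_nonempty_def by force
  then have "Min (y ` {j\<in>S. 0 < y j}) \<in> y ` {j\<in>S. 0 < y j}"
    using finite_stores by simp
  moreover have "power_from y (Min (y ` {j\<in>S. 0 < y j})) = power_nonempty y"
    unfolding power_from_def power_nonempty_def using finite_stores
    by (intro sum.cong) auto
  ultimately have "{v \<in> y ` {j\<in>S. 0 < y j}. D \<le> power_from y v} \<noteq> {}"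
    using D_le by auto
  then show ?thesis unfolding threshold_def using finite_stores by (intro Max_in) auto
qed

lemma threshold_pos: "0 < threshold y D"
  using threshold_mem by auto

lemma power_from_above_threshold:
  assumes "v \<in> y ` {j\<in>S. 0 < y j}" "threshold y D < v"
  shows "power_from y v < D"
proof (rule ccontr)
  assume "\<not> power_from y v < D"
  then have "v \<le> threshold y D"
    unfolding threshold_def using assms(1) finite_stores by (intro Max_ge) auto
  then show False using assms(2) by simp
qed

lemma power_above_threshold_less: "power_above y (threshold y D) < D"
proof (rule ccontr)
  let ?\<tau> = "threshold y D"
  define U where "U = {v \<in> y ` {j\<in>S. 0 < y j}. ?\<tau> < v}"
  assume "\<not> power_above y ?\<tau> < D"
  then have "0 < power_above y ?\<tau>" using D_pos by simp
  then obtain j where "j \<in> S" "?\<tau> < y j"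
    unfolding power_above_def by (metis (no_types, lifting) Collect_empty_eq less_irrefl sum.empty)
  then have "U \<noteq> {}" using threshold_pos unfolding U_def by force
  moreover have "finite U" using finite_stores unfolding U_def by simp
  ultimately have min_U: "Min U \<in> U" by simp
  have "power_from y (Min U) = power_above y ?\<tau>"
    unfolding power_from_def power_above_def
  proof (intro sum.cong refl set_eqI iffI)
    fix i assume "i \<in> {j\<in>S. 0 < y j \<and> Min U \<le> y j}"
    then show "i \<in> {j\<in>S. ?\<tau> < y j}" using min_U by (auto simp: U_def)
  next
    fix i assume i: "i \<in> {j\<in>S. ?\<tau> < y j}"
    then have "y i \<in> U" using threshold_pos by (auto simp: U_def)
    then show "i \<in> {j\<in>S. 0 < y j \<and> Min U \<le> y j}"
      using i threshold_pos \<open>finite U\<close> by auto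
  qed
  then show False
    using power_from_above_threshold[of "Min U"] min_U \<open>\<not> power_above y ?\<tau> < D\<close>
    by (auto simp: U_def)
qed

definition partial_fraction :: real where
  "partial_fraction = (D - power_above y (threshold y D)) / power_at y (threshold y D)"

lemma partial_fraction_bounds: "0 < partial_fraction" "partial_fraction \<le> 1"
proof -
  obtain i where i: "i \<in> S" "y i = threshold y D" using threshold_mem by auto
  have pos: "0 < power_at y (threshold y D)" using power_at_pos[OF i(1), of y] i(2) by simp
  show "0 < partial_fraction"
    using power_above_threshold_less pos by (simp add: partial_fraction_def)
  show "partial_fraction \<le> 1"
    using threshold_mem power_from_eq[OF threshold_pos] pos by (simp add: partial_fraction_def)
qed

lemma discharge_fraction_threshold:
  assumes i: "i \<in> S"
  shows "discharge_fraction y D (y i) =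
           (if threshold y D < y i then 1 else if y i = threshold y D then partial_fraction else 0)"
proof -
  let ?\<tau> = "threshold y D"
  consider "?\<tau> < y i" | "y i = ?\<tau>" | "0 < y i" "y i < ?\<tau>" | "y i \<le> 0" by linarith
  then show ?thesis
  proof cases
    case 1
    then have "power_from y (y i) < D"
      using power_from_above_threshold i threshold_pos by force
    then have "1 < (D - power_above y (y i)) / power_at y (y i)"
      using power_from_eq[of "y i"] power_at_pos[OF i] 1 threshold_pos by (simp add: field_simps)
    then show ?thesis using 1 threshold_pos by (simp add: discharge_fraction_def)
  next
    case 2
    then show ?thesis using partial_fraction_bounds threshold_pos
      by (simp add: discharge_fraction_def partial_fraction_def)
  next
    case 3
    have "power_from y ?\<tau> \<le> power_above y (y i)"
      unfolding power_from_def power_above_def by (rule sum_P_mono) (use 3 in auto)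
    then have "(D - power_above y (y i)) / power_at y (y i) \<le> 0"
      using threshold_mem power_at_pos[OF i] by (simp add: divide_nonpos_pos)
    then show ?thesis using 3 by (simp add: discharge_fraction_def)
  next
    case 4
    then show ?thesis using threshold_pos by (simp add: discharge_fraction_def)
  qed
qed

lemma sum_discharge_fraction_pos: "(\<Sum>i\<in>S. P i * discharge_fraction y D (y i)) = D"
proof -
  let ?\<tau> = "threshold y D"
  have "(\<Sum>i\<in>S. P i * discharge_fraction y D (y i)) =
        (\<Sum>i\<in>S. (if ?\<tau> < y i then P i else 0) + (if y i = ?\<tau> then partial_fraction * P i else 0))"
    by (intro sum.cong) (auto simp: discharge_fraction_threshold)
  also have "\<dots> = power_above y ?\<tau> + partial_fraction * power_at y ?\<tau>"
    by (simp add: sum.distrib sum.If_cases finite_stores power_above_def power_at_def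
        sum_distrib_left Int_def conj_commute)
  also have "\<dots> = D"
  proof -
    have "power_at y ?\<tau> \<noteq> 0"
      using partial_fraction_bounds(1) by (auto simp: partial_fraction_def)
    then show ?thesis by (simp add: partial_fraction_def field_simps)
  qed
  finally show ?thesis .
qed

end

lemma sum_discharge_fraction:
  assumes "0 \<le> D" "D \<le> power_nonempty y"
  shows "(\<Sum>i\<in>S. P i * discharge_fraction y D (y i)) = D"
  using assms sum_discharge_fraction_pos[of D y] discharge_fraction_zero_level[of _ D y]
  by (cases "D = 0") auto

lemma ggddf_at_discharge_fraction:
  assumes E: "\<And>i. i \<in> S \<Longrightarrow> E i t = P i * y i"
    and r: "\<And>i. i \<in> S \<Longrightarrow> r i t = P i * discharge_fraction y (served_level y t) (y i)"
    and "0 \<le> d t"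
  shows "ggddf_at S P d E r t"
proof -
  define D where "D = served_level y t"
  have D_bounds: "0 \<le> D" "D \<le> power_nonempty y"
    using \<open>0 \<le> d t\<close> power_nonempty_nonneg by (auto simp: D_def served_level_def)
  have dur: "E i t / P i = y i" if "i \<in> S" for i
    using E[OF that] P_pos[OF that] by simp
  have nonempty: "{i\<in>S. E i t > 0} = {i\<in>S. 0 < y i}"
    using E P_pos by (auto simp: zero_less_mult_iff) (metis not_less_iff_gr_or_eq)
  have durations: "(\<lambda>i. E i t / P i) ` {i\<in>S. E i t > 0} = y ` {i\<in>S. 0 < y i}"
    unfolding nonempty using dur by (auto simp: image_def)
  have cum: "(\<Sum>i\<in>{i\<in>{i\<in>S. E i t > 0}. E i t / P i \<ge> v}. P i) = power_from y v" for v
    unfolding power_from_def nonempty by (rule sum.cong) (auto simp: dur)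
  have level: "min (d t) (\<Sum>i\<in>{i\<in>S. E i t > 0}. P i) = D"
    by (simp add: nonempty D_def served_level_def power_nonempty_def)
  show ?thesis
  proof (cases "D = 0")
    case True
    then have "r i t = 0" if "i \<in> S" for i
      using r[OF that] discharge_fraction_zero_level[OF that] by (simp add: D_def)
    then show ?thesis unfolding ggddf_at_def Let_def level using True by simp
  next
    case False
    then have D_pos: "0 < D" using D_bounds by simp
    note threshold = threshold_mem[OF D_pos D_bounds(2)]
      power_from_above_threshold[OF D_pos D_bounds(2)]
      partial_fraction_bounds[OF D_pos D_bounds(2)]
    have "r i t = (if i \<in> {i\<in>S. E i t > 0} \<and> E i t / P i > threshold y D then P i
                   else if i \<in> {i\<in>S. E i t > 0} \<and> E i t / P i = threshold y D
                        then partial_fraction y D * P i else 0)" if "i \<in> S" for i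
      using r[OF that] discharge_fraction_threshold[OF D_pos D_bounds(2) that]
        threshold_pos[OF D_pos D_bounds(2)] that
      by (auto simp: nonempty dur D_def)
    moreover have "(\<Sum>i\<in>S. r i t) = D"
      using sum_discharge_fraction[OF D_bounds] r by (simp add: D_def)
    ultimately show ?thesis
      unfolding ggddf_at_def Let_def level durations cum using False threshold
      by (intro conjI impI bexI[of _ "threshold y D"] exI[of _ "partial_fraction y D"]) auto
  qed
qed

section \<open>Durations under a frozen ranking\<close>

text \<open>While the ranking of the durations stays that of \<open>y\<close>, GGDDF lets the duration of each
  store decrease at the rate \<open>r\<^sub>i/P\<^sub>i\<close> given by its discharge fraction, which then depends on time
  only through the demand.\<close>
definition frozen_flow :: "real \<Rightarrow> ('i \<Rightarrow> real) \<Rightarrow> real \<Rightarrow> real \<Rightarrow> real" where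
  "frozen_flow s y t v = v - integral {s..t} (\<lambda>u. discharge_fraction y (served_level y u) v)"

definition frozen_durations :: "real \<Rightarrow> ('i \<Rightarrow> real) \<Rightarrow> real \<Rightarrow> 'i \<Rightarrow> real" where
  "frozen_durations s y t i = frozen_flow s y t (y i)"

lemma discharge_fraction_antimono:
  assumes "0 \<le> u" "u \<le> u'"
  shows "discharge_fraction y (served_level y u') v \<le> discharge_fraction y (served_level y u) v"
proof -
  have "served_level y u' \<le> served_level y u"
    using d_antimono[OF assms] by (auto simp: served_level_def)
  then have "(served_level y u' - power_above y v) / power_at y v \<le>
             (served_level y u - power_above y v) / power_at y v"
    using power_at_nonneg by (intro divide_right_mono) auto
  then show ?thesis by (auto simp: discharge_fraction_def)
qed

lemma discharge_fraction_integrable: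
  assumes "0 \<le> s"
  shows "(\<lambda>u. discharge_fraction y (served_level y u) v) integrable_on {s..b}"
proof -
  have "mono_on {s..b} (\<lambda>u. - discharge_fraction y (served_level y u) v)"
    using discharge_fraction_antimono assms by (auto simp: mono_on_def)
  then have "(\<lambda>u. - (- discharge_fraction y (served_level y u) v)) integrable_on {s..b}"
    by (intro integrable_neg integrable_on_mono_on)
  then show ?thesis by simp
qed

lemma continuous_on_frozen_flow: "0 \<le> s \<Longrightarrow> continuous_on A (\<lambda>t. frozen_flow s y t v)"
  unfolding frozen_flow_def using discharge_fraction_bounds
  by (intro continuous_intros continuous_on_indefinite_integral_unit_valued
      discharge_fraction_integrable) auto

lemma frozen_flow_zero [simp]: "frozen_flow s y t 0 = 0"
  by (simp add: frozen_flow_def discharge_fraction_def)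

lemma frozen_flow_start [simp]: "frozen_flow s y s v = v"
  by (simp add: frozen_flow_def)

text \<open>The times after \<open>s\<close> at which the ranking of \<open>y\<close> may stop being the true one: two distinct
  durations meet, or a nonempty store empties.\<close>
definition events :: "real \<Rightarrow> ('i \<Rightarrow> real) \<Rightarrow> real set" where
  "events s y = {t. s \<le> t \<and>
     ((\<exists>i\<in>S. \<exists>j\<in>S. y i \<noteq> y j \<and> frozen_durations s y t i = frozen_durations s y t j) \<or>
      (\<exists>i\<in>S. 0 < y i \<and> frozen_durations s y t i = 0))}"

text \<open>Without any event, the phase is ended after one time unit, which merely restarts it.\<close>
definition next_event :: "real \<Rightarrow> ('i \<Rightarrow> real) \<Rightarrow> real" where
  "next_event s y = (if events s y = {} then s + 1 else Inf (events s y))"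

lemma bdd_below_events: "bdd_below (events s y)"
  by (rule bdd_belowI[of _ s]) (auto simp: events_def)

lemma next_event_le: "u \<in> events s y \<Longrightarrow> next_event s y \<le> u"
  unfolding next_event_def using bdd_below_events by (auto intro!: cInf_lower)

lemma closed_events:
  assumes "0 \<le> s"
  shows "closed (events s y)"
proof -
  have "events s y = {s..} \<inter>
     ((\<Union>i\<in>S. \<Union>j\<in>S. if y i \<noteq> y j then {t. frozen_flow s y t (y i) = frozen_flow s y t (y j)} else {})
      \<union> (\<Union>i\<in>S. if 0 < y i then {t. frozen_flow s y t (y i) = 0} else {}))"
    by (auto simp: events_def frozen_durations_def split: if_splits)
  then show ?thesis using finite_stores
    by (simp only:) (intro closed_Int closed_Un closed_UN closed_atLeast;
        auto intro!: closed_Collect_eq continuous_on_frozen_flow assms continuous_intros)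
qed

lemma next_event_mem: "0 \<le> s \<Longrightarrow> events s y \<noteq> {} \<Longrightarrow> next_event s y \<in> events s y"
  unfolding next_event_def using closed_contains_Inf closed_events bdd_below_events by auto

lemma next_event_gt:
  assumes "0 \<le> s"
  shows "s < next_event s y"
proof (cases "events s y = {}")
  case True
  then show ?thesis by (simp add: next_event_def)
next
  case False
  have "next_event s y \<in> events s y" using next_event_mem[OF assms False] .
  moreover have "s \<notin> events s y" by (auto simp: events_def frozen_durations_def)
  ultimately show ?thesis by (auto simp: events_def less_le frozen_durations_def)
qed

context
  fixes s :: real and y :: "'i \<Rightarrow> real"
  assumes s_nonneg: "0 \<le> s" and y_nonneg: "\<And>i. i \<in> S \<Longrightarrow> 0 \<le> y i"
begin

lemma continuous_on_frozen_durations: "continuous_on UNIV (\<lambda>t. frozen_durations s y t i)"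
  unfolding frozen_durations_def by (rule continuous_on_frozen_flow[OF s_nonneg])

lemma frozen_durations_order:
  assumes i: "i \<in> S" and j: "j \<in> S" and lt: "y i < y j"
    and t: "s \<le> t" "t \<le> next_event s y"
  shows "frozen_durations s y t i \<le> frozen_durations s y t j"
    and "t < next_event s y \<Longrightarrow> frozen_durations s y t i < frozen_durations s y t j"
proof -
  let ?g = "\<lambda>u. frozen_durations s y u j - frozen_durations s y u i"
  have g: "continuous_on UNIV ?g"
    by (intro continuous_intros continuous_on_frozen_durations)
  have g_start: "0 < ?g s" using lt by (simp add: frozen_durations_def)
  have no_zero: "?g u \<noteq> 0" if "s \<le> u" "u < next_event s y" for u
    using that i j lt next_event_le[of u s y] by (force simp: events_def)
  show "frozen_durations s y t i \<le> frozen_durations s y t j"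
    using continuous_first_zero[OF g g_start, of t] t no_zero by force
  show "frozen_durations s y t i < frozen_durations s y t j" if "t < next_event s y"
    using continuous_first_zero[OF g g_start, of t] t that no_zero by force
qed

lemma frozen_durations_nonneg:
  assumes i: "i \<in> S" and t: "s \<le> t" "t \<le> next_event s y"
  shows "0 \<le> frozen_durations s y t i"
    and "t < next_event s y \<Longrightarrow> 0 < y i \<Longrightarrow> 0 < frozen_durations s y t i"
proof -
  have pos: "0 \<le> frozen_durations s y t i \<and>
      (t < next_event s y \<longrightarrow> 0 < frozen_durations s y t i)" if "0 < y i"
  proof -
    have g_start: "0 < frozen_durations s y s i" using that by (simp add: frozen_durations_def)
    have no_zero: "frozen_durations s y u i \<noteq> 0" if "s \<le> u" "u < next_event s y" for u
      using that i \<open>0 < y i\<close> next_event_le[of u s y] by (force simp: events_def)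
    show ?thesis
      using continuous_first_zero[OF continuous_on_frozen_durations g_start, of t] t no_zero
      by force
  qed
  have "y i = 0 \<Longrightarrow> frozen_durations s y t i = 0" by (simp add: frozen_durations_def)
  then show "0 \<le> frozen_durations s y t i"
    using pos y_nonneg[OF i] by (cases "y i = 0") auto
  show "t < next_event s y \<Longrightarrow> 0 < y i \<Longrightarrow> 0 < frozen_durations s y t i"
    using pos by auto
qed

lemma frozen_durations_mono:
  assumes "i \<in> S" "j \<in> S" "y i \<le> y j" "s \<le> t" "t \<le> next_event s y"
  shows "frozen_durations s y t i \<le> frozen_durations s y t j"
  using frozen_durations_order(1)[OF assms(1,2) _ assms(4,5)] assms(3)
  by (cases "y i = y j") (auto simp: frozen_durations_def)

lemma frozen_durations_iff:
  assumes i: "i \<in> S" and j: "j \<in> S" and t: "s \<le> t" "t < next_event s y"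
  shows "frozen_durations s y t i < frozen_durations s y t j \<longleftrightarrow> y i < y j"
    and "frozen_durations s y t i = frozen_durations s y t j \<longleftrightarrow> y i = y j"
    and "0 < frozen_durations s y t i \<longleftrightarrow> 0 < y i"
proof -
  have "y i < y j \<Longrightarrow> frozen_durations s y t i < frozen_durations s y t j"
    "y j < y i \<Longrightarrow> frozen_durations s y t j < frozen_durations s y t i"
    "y i = y j \<Longrightarrow> frozen_durations s y t i = frozen_durations s y t j"
    using frozen_durations_order(2)[OF i j _ t(1)] frozen_durations_order(2)[OF j i _ t(1)] t
    by (auto simp: frozen_durations_def)
  then show "frozen_durations s y t i < frozen_durations s y t j \<longleftrightarrow> y i < y j"
    and "frozen_durations s y t i = frozen_durations s y t j \<longleftrightarrow> y i = y j"
    by (metis less_asym linorder_neqE)+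
  have "y i = 0 \<Longrightarrow> frozen_durations s y t i = 0" by (simp add: frozen_durations_def)
  then show "0 < frozen_durations s y t i \<longleftrightarrow> 0 < y i"
    using frozen_durations_nonneg(2)[OF i t(1)] t y_nonneg[OF i] by force
qed

text \<open>Before the next event the frozen ranking is the true one, so the open-loop rates agree with
  the closed-loop GGDDF rates.\<close>
lemma discharge_fraction_frozen_durations:
  assumes i: "i \<in> S" and t: "s \<le> t" "t < next_event s y"
  defines "z \<equiv> frozen_durations s y t"
  shows "discharge_fraction z (served_level z t) (z i) = discharge_fraction y (served_level y t) (y i)"
proof -
  have "power_nonempty z = power_nonempty y" unfolding power_nonempty_def z_def
    by (rule sum.cong) (use frozen_durations_iff(3) t in auto)
  moreover have "power_above z (z i) = power_above y (y i)" unfolding power_above_def z_def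
    by (rule sum.cong) (use frozen_durations_iff(1) t i in auto)
  moreover have "power_at z (z i) = power_at y (y i)" unfolding power_at_def z_def
    by (rule sum.cong) (use frozen_durations_iff(2) t i in auto)
  moreover have "0 < z i \<longleftrightarrow> 0 < y i" unfolding z_def using frozen_durations_iff(3)[OF i i t] .
  ultimately show ?thesis unfolding discharge_fraction_def served_level_def by simp
qed

lemma card_frozen_durations_next_event:
  defines "y' \<equiv> frozen_durations s y (next_event s y)"
  shows "card (y' ` S \<union> {0}) \<le> card (y ` S \<union> {0})"
    and "events s y \<noteq> {} \<Longrightarrow> card (y' ` S \<union> {0}) < card (y ` S \<union> {0})"
proof -
  let ?G = "frozen_flow s y (next_event s y)"
  have img: "y' ` S \<union> {0} = ?G ` (y ` S \<union> {0})"
    by (auto simp: y'_def frozen_durations_def image_image)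
  have fin: "finite (y ` S \<union> {0})" using finite_stores by simp
  show "card (y' ` S \<union> {0}) \<le> card (y ` S \<union> {0})" using card_image_le[OF fin, of ?G] img by simp
  assume "events s y \<noteq> {}"
  then have "next_event s y \<in> events s y" using next_event_mem[OF s_nonneg] by blast
  then have "\<not> inj_on ?G (y ` S \<union> {0})"
    unfolding events_def frozen_durations_def inj_on_def by auto
  then have "card (?G ` (y ` S \<union> {0})) \<noteq> card (y ` S \<union> {0})"
    using inj_on_iff_eq_card[OF fin] by blast
  then show "card (y' ` S \<union> {0}) < card (y ` S \<union> {0})"
    unfolding img using card_image_le[OF fin, of ?G] by simp
qed

end

end

section \<open>The GGDDF policy\<close>

locale ggddf_run = ggddf_setting S P d for S :: "'i set" and P d +
  fixes E0 :: "'i \<Rightarrow> real"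
  assumes E0_nonneg: "\<And>i. i \<in> S \<Longrightarrow> 0 \<le> E0 i"
begin

primrec phase :: "nat \<Rightarrow> real \<times> ('i \<Rightarrow> real)" where
  "phase 0 = (0, \<lambda>i. E0 i / P i)"
| "phase (Suc k) =
     (next_event (fst (phase k)) (snd (phase k)),
      frozen_durations (fst (phase k)) (snd (phase k)) (next_event (fst (phase k)) (snd (phase k))))"

definition phase_start :: "nat \<Rightarrow> real" where
  "phase_start k = fst (phase k)"

definition phase_durations :: "nat \<Rightarrow> 'i \<Rightarrow> real" where
  "phase_durations k = snd (phase k)"

lemma phase_start_0 [simp]: "phase_start 0 = 0"
  and phase_durations_0: "phase_durations 0 = (\<lambda>i. E0 i / P i)"
  by (simp_all add: phase_start_def phase_durations_def)

lemma phase_start_Suc: "phase_start (Suc k) = next_event (phase_start k) (phase_durations k)"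
  and phase_durations_Suc:
    "phase_durations (Suc k) = frozen_durations (phase_start k) (phase_durations k) (phase_start (Suc k))"
  by (simp_all add: phase_start_def phase_durations_def)

lemma phase_nonneg: "0 \<le> phase_start k \<and> (\<forall>i\<in>S. 0 \<le> phase_durations k i)"
proof (induction k)
  case 0
  then show ?case using E0_nonneg P_pos by (simp add: phase_durations_0 less_imp_le)
next
  case (Suc k)
  then have k: "0 \<le> phase_start k" "\<And>i. i \<in> S \<Longrightarrow> 0 \<le> phase_durations k i" by auto
  have "0 \<le> phase_durations (Suc k) i" if "i \<in> S" for i
    unfolding phase_durations_Suc phase_start_Suc
    using frozen_durations_nonneg(1)[of "phase_start k" "phase_durations k" i, OF k(1) k(2) that]
      next_event_gt[OF k(1)] by (meson less_imp_le order_refl)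
  moreover have "0 \<le> phase_start (Suc k)"
    using next_event_gt[OF k(1), of "phase_durations k"] k(1) by (simp add: phase_start_Suc)
  ultimately show ?case by simp
qed

lemma phase_start_nonneg: "0 \<le> phase_start k"
  and phase_durations_nonneg: "i \<in> S \<Longrightarrow> 0 \<le> phase_durations k i"
  using phase_nonneg by auto

lemma phase_start_less: "phase_start k < phase_start (Suc k)"
  using next_event_gt[OF phase_start_nonneg] by (simp add: phase_start_Suc)

lemma strict_mono_phase_start: "strict_mono phase_start"
  by (rule strict_mono_Suc_iff[THEN iffD2]) (simp add: phase_start_less)

definition phase_card :: "nat \<Rightarrow> nat" where
  "phase_card k = card (phase_durations k ` S \<union> {0})"

text \<open>Each phase either ends with an event, which merges two of the finitely many duration values
  (\<open>0\<close> included), or lasts one time unit; hence the phases exhaust \<open>[0,\<infinity>)\<close>.\<close>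
lemma phase_start_lower_bound: "real k \<le> phase_start k + real (phase_card 0) - real (phase_card k)"
proof (induction k)
  case 0
  then show ?case by simp
next
  case (Suc k)
  note card = card_frozen_durations_next_event[of "phase_start k" "phase_durations k",
      OF phase_start_nonneg phase_durations_nonneg]
  show ?case
  proof (cases "events (phase_start k) (phase_durations k) = {}")
    case True
    then show ?thesis
      using Suc card(1) by (simp add: phase_start_Suc phase_durations_Suc phase_card_def next_event_def)
  next
    case False
    then show ?thesis
      using Suc card(2) phase_start_less[of k]
      by (simp add: phase_start_Suc phase_durations_Suc phase_card_def)
  qed
qed

lemma phase_start_unbounded: "\<exists>k. T < phase_start k"
proof -
  obtain k :: nat where "T + real (phase_card 0) < real k" using reals_Archimedean2 by blast
  then show ?thesis using phase_start_lower_bound[of k] by (intro exI[of _ k]) simp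
qed

definition phase_of :: "real \<Rightarrow> nat" where
  "phase_of t = (LEAST k. t < phase_start (Suc k))"

lemma phase_of_eqI:
  assumes "phase_start k \<le> t" "t < phase_start (Suc k)"
  shows "phase_of t = k"
  unfolding phase_of_def
proof (rule Least_equality)
  fix m assume "t < phase_start (Suc m)"
  then show "k \<le> m" using assms strict_mono_phase_start
    by (metis not_less_eq_eq order.strict_trans2 strict_mono_less_eq order_less_irrefl)
qed fact

lemma phase_of_bounds:
  assumes "0 \<le> t"
  shows "phase_start (phase_of t) \<le> t" "t < phase_start (Suc (phase_of t))"
proof -
  obtain k where "t < phase_start k" using phase_start_unbounded by blast
  then have "t < phase_start (Suc k)" using phase_start_less[of k] by simp
  then show "t < phase_start (Suc (phase_of t))" unfolding phase_of_def by (rule LeastI)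
  show "phase_start (phase_of t) \<le> t"
  proof (cases "phase_of t")
    case (Suc m)
    then have "\<not> t < phase_start (Suc m)"
      using not_less_Least[of m "\<lambda>k. t < phase_start (Suc k)"] unfolding phase_of_def by simp
    then show ?thesis using Suc by simp
  qed (use assms in simp)
qed

definition durations :: "real \<Rightarrow> 'i \<Rightarrow> real" where
  "durations t = frozen_durations (phase_start (phase_of t)) (phase_durations (phase_of t)) t"

definition ggddf_rate :: "'i \<Rightarrow> real \<Rightarrow> real" where
  "ggddf_rate i t =
     (if 0 \<le> t then P i * discharge_fraction (phase_durations (phase_of t))
                             (served_level (phase_durations (phase_of t)) t)
                             (phase_durations (phase_of t) i)
      else 0)"

lemma ggddf_rate_phase:
  assumes "phase_start k \<le> u" "u < phase_start (Suc k)"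
  shows "ggddf_rate i u =
           P i * discharge_fraction (phase_durations k) (served_level (phase_durations k) u)
                   (phase_durations k i)"
  using phase_of_eqI[OF assms] phase_start_nonneg[of k] assms by (simp add: ggddf_rate_def)

lemma ggddf_rate_bounds: "i \<in> S \<Longrightarrow> 0 \<le> ggddf_rate i t \<and> ggddf_rate i t \<le> P i"
  using P_pos[of i] discharge_fraction_bounds
  by (auto simp: ggddf_rate_def intro: mult_left_le mult_nonneg_nonneg)

lemma has_integral_ggddf_rate_phase:
  assumes "phase_start k \<le> t" "t \<le> phase_start (Suc k)"
  shows "(ggddf_rate i has_integral
           P i * (phase_durations k i - frozen_durations (phase_start k) (phase_durations k) t i))
         {phase_start k..t}"
proof -
  let ?f = "\<lambda>u. discharge_fraction (phase_durations k) (served_level (phase_durations k) u)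
                  (phase_durations k i)"
  have "(?f has_integral integral {phase_start k..t} ?f) {phase_start k..t}"
    using discharge_fraction_integrable[OF phase_start_nonneg] by blast
  then have "((\<lambda>u. P i * ?f u) has_integral
      P i * (phase_durations k i - frozen_durations (phase_start k) (phase_durations k) t i))
      {phase_start k..t}"
    unfolding frozen_durations_def frozen_flow_def by (simp add: has_integral_mult_right)
  then show ?thesis
    by (rule has_integral_spike[OF negligible_sing[of t], rotated]) (use assms ggddf_rate_phase in auto)
qed

lemma has_integral_ggddf_rate_until_phase:
  assumes "i \<in> S"
  shows "phase_start k \<le> t \<Longrightarrow> t \<le> phase_start (Suc k) \<Longrightarrow>
    (ggddf_rate i has_integral E0 i - P i * frozen_durations (phase_start k) (phase_durations k) t i) {0..t}"
proof (induction k arbitrary: t)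
  case 0
  then show ?case
    using has_integral_ggddf_rate_phase[of 0 t i] P_pos[OF assms]
    by (simp add: phase_durations_0 algebra_simps)
next
  case (Suc k)
  have "(ggddf_rate i has_integral E0 i - P i * phase_durations (Suc k) i) {0..phase_start (Suc k)}"
    using Suc.IH[of "phase_start (Suc k)"] phase_start_less[of k] by (simp add: phase_durations_Suc)
  moreover have "(ggddf_rate i has_integral
      P i * (phase_durations (Suc k) i
             - frozen_durations (phase_start (Suc k)) (phase_durations (Suc k)) t i))
      {phase_start (Suc k)..t}"
    using has_integral_ggddf_rate_phase Suc.prems by simp
  ultimately have "(ggddf_rate i has_integral
      (E0 i - P i * phase_durations (Suc k) i) + P i * (phase_durations (Suc k) i
             - frozen_durations (phase_start (Suc k)) (phase_durations (Suc k)) t i)) {0..t}"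
    by (rule has_integral_combine[rotated 2]) (use phase_start_nonneg Suc.prems in auto)
  then show ?case by (simp add: algebra_simps)
qed

lemma has_integral_ggddf_rate:
  assumes "i \<in> S" "0 \<le> t"
  shows "(ggddf_rate i has_integral E0 i - P i * durations t i) {0..t}"
  unfolding durations_def
  using has_integral_ggddf_rate_until_phase[OF assms(1)] phase_of_bounds[OF assms(2)] by simp

lemma energy_ggddf_rate: "i \<in> S \<Longrightarrow> 0 \<le> t \<Longrightarrow> energy E0 ggddf_rate i t = P i * durations t i"
  using integral_unique[OF has_integral_ggddf_rate] by (simp add: energy_def)

lemma durations_nonneg: "i \<in> S \<Longrightarrow> 0 \<le> t \<Longrightarrow> 0 \<le> durations t i"
  unfolding durations_def
  using frozen_durations_nonneg(1)[of "phase_start (phase_of t)" "phase_durations (phase_of t)" i t,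
      OF phase_start_nonneg phase_durations_nonneg] phase_of_bounds[of t]
  by (simp add: phase_start_Suc less_imp_le)

lemma ggddf_rate_closed_loop:
  assumes "i \<in> S" "0 \<le> t"
  shows "ggddf_rate i t = P i * discharge_fraction (durations t) (served_level (durations t) t) (durations t i)"
  unfolding durations_def
  using discharge_fraction_frozen_durations[of "phase_start (phase_of t)" "phase_durations (phase_of t)"
      i t, OF phase_start_nonneg phase_durations_nonneg assms(1)]
    phase_of_bounds[OF assms(2)] assms(2)
  by (simp add: phase_start_Suc ggddf_rate_def)

lemma ggddf_at_ggddf_rate: "0 \<le> t \<Longrightarrow> ggddf_at S P d (energy E0 ggddf_rate) ggddf_rate t"
  using ggddf_at_discharge_fraction energy_ggddf_rate ggddf_rate_closed_loop d_nonneg by blast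

lemma sum_ggddf_rate: "0 \<le> t \<Longrightarrow> (\<Sum>i\<in>S. ggddf_rate i t) = min (d t) (power_nonempty (durations t))"
  using sum_discharge_fraction[of "served_level (durations t) t" "durations t"]
    ggddf_rate_closed_loop d_nonneg power_nonempty_nonneg
  by (simp add: served_level_def)

lemma phase_durations_mono:
  "k \<le> m \<Longrightarrow> i \<in> S \<Longrightarrow> j \<in> S \<Longrightarrow> phase_durations k i \<le> phase_durations k j \<Longrightarrow>
   phase_durations m i \<le> phase_durations m j"
proof (induction m rule: dec_induct)
  case (step n)
  then show ?case
    using frozen_durations_mono[of "phase_start n" "phase_durations n" i j "phase_start (Suc n)",
        OF phase_start_nonneg phase_durations_nonneg] phase_start_less[of n]
    by (simp add: phase_durations_Suc phase_start_Suc)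
qed simp

lemma durations_mono:
  assumes i: "i \<in> S" and j: "j \<in> S" and "0 \<le> s" "s \<le> t" and le: "durations s i \<le> durations s j"
  shows "durations t i \<le> durations t j"
proof -
  have "0 \<le> t" using assms by simp
  have "phase_of s \<le> phase_of t"
  proof (rule ccontr)
    assume "\<not> phase_of s \<le> phase_of t"
    then have "phase_start (Suc (phase_of t)) \<le> phase_start (phase_of s)"
      using strict_mono_phase_start by (simp add: strict_mono_less_eq)
    then show False using phase_of_bounds \<open>0 \<le> s\<close> \<open>0 \<le> t\<close> \<open>s \<le> t\<close> by fastforce
  qed
  moreover have "phase_durations (phase_of s) i \<le> phase_durations (phase_of s) j"
    using le frozen_durations_iff(1)[of "phase_start (phase_of s)" "phase_durations (phase_of s)" j i s,
        OF phase_start_nonneg phase_durations_nonneg j i] phase_of_bounds[OF \<open>0 \<le> s\<close>]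
    by (auto simp: durations_def phase_start_Suc)
  ultimately have "phase_durations (phase_of t) i \<le> phase_durations (phase_of t) j"
    using phase_durations_mono i j by blast
  then show ?thesis
    using frozen_durations_mono[of "phase_start (phase_of t)" "phase_durations (phase_of t)" i j t,
        OF phase_start_nonneg phase_durations_nonneg i j] phase_of_bounds[OF \<open>0 \<le> t\<close>]
    by (simp add: durations_def phase_start_Suc less_imp_le)
qed

lemma durations_antimono:
  assumes i: "i \<in> S" and "0 \<le> s" "s \<le> t"
  shows "durations t i \<le> durations s i"
proof -
  have "0 \<le> t" using assms by simp
  note has_int = has_integral_ggddf_rate[OF i \<open>0 \<le> s\<close>] has_integral_ggddf_rate[OF i \<open>0 \<le> t\<close>]
  then have int_t: "ggddf_rate i integrable_on {0..t}" by blast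
  have "integral {0..s} (ggddf_rate i) + integral {s..t} (ggddf_rate i) = integral {0..t} (ggddf_rate i)"
    using Henstock_Kurzweil_Integration.integral_combine[of 0 s t "ggddf_rate i"] assms int_t by auto
  moreover have "0 \<le> integral {s..t} (ggddf_rate i)"
    using integrable_subinterval_real[OF int_t, of s t] assms ggddf_rate_bounds[OF i]
    by (intro integral_nonneg) auto
  ultimately have "P i * durations t i \<le> P i * durations s i"
    using integral_unique[OF has_int(1)] integral_unique[OF has_int(2)] by simp
  then show ?thesis using P_pos[OF i] by simp
qed

lemma ggddf_rate_antimono_on_phase:
  assumes "i \<in> S" "phase_start k \<le> u" "u \<le> u'" "u' < phase_start (Suc k)"
  shows "ggddf_rate i u' \<le> ggddf_rate i u"
  using assms P_pos discharge_fraction_antimono[OF order.trans[OF phase_start_nonneg]]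
  by (simp add: ggddf_rate_phase[of k] mult_left_mono)

lemma ggddf_rate_measurable:
  assumes i: "i \<in> S"
  shows "set_borel_measurable lborel {0..} (ggddf_rate i)"
proof -
  define f where "f x = - (indicator {0..} x *\<^sub>R ggddf_rate i x)" for x :: real
  define C where "C = insert {..<0} (range (\<lambda>k. {phase_start k..<phase_start (Suc k)}))"
  have "f \<in> borel_measurable borel"
  proof (rule borel_measurable_piecewise_mono[of C])
    show "countable C" "\<And>c. c \<in> C \<Longrightarrow> c \<in> sets borel" by (auto simp: C_def)
    show "\<Union>C = UNIV"
    proof (intro set_eqI iffI)
      fix x :: real
      show "x \<in> \<Union>C"
        using phase_of_bounds[of x] by (cases "x < 0") (auto simp: C_def)
    qed auto
    show "mono_on c f" if "c \<in> C" for c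
    proof -
      consider "c = {..<0}" | k where "c = {phase_start k..<phase_start (Suc k)}"
        using \<open>c \<in> C\<close> unfolding C_def by blast
      then show ?thesis
      proof cases
        case 2
        then show ?thesis
          using ggddf_rate_antimono_on_phase[OF i, of k] phase_start_nonneg[of k]
          by (auto simp: mono_on_def f_def indicator_def)
      qed (auto simp: mono_on_def f_def)
    qed
  qed
  then have "(\<lambda>x. - f x) \<in> borel_measurable borel" by measurable
  then show ?thesis unfolding set_borel_measurable_def f_def by simp
qed

section \<open>GGDDF serves the demand\<close>

lemma ggddf_rate_full_before_shortfall:
  assumes "0 \<le> T" and shortfall: "power_nonempty (durations T) < d T"
    and k: "k \<in> S" "0 < durations T k" and "0 \<le> s" "s \<le> T"
  shows "ggddf_rate k s = P k"
proof -
  define z where "z = durations s"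
  define J where "J = {j\<in>S. z k \<le> z j}"
  have "0 < z k" using durations_antimono[OF k(1) \<open>0 \<le> s\<close> \<open>s \<le> T\<close>] k by (simp add: z_def)
  have "J \<subseteq> {j\<in>S. 0 < durations T j}"
    using durations_mono[OF k(1) _ \<open>0 \<le> s\<close> \<open>s \<le> T\<close>] k by (force simp: J_def z_def)
  then have "(\<Sum>j\<in>J. P j) \<le> power_nonempty (durations T)"
    unfolding power_nonempty_def by (rule sum_P_mono) auto
  then have "(\<Sum>j\<in>J. P j) < d s" using shortfall d_antimono[OF \<open>0 \<le> s\<close> \<open>s \<le> T\<close>] by simp
  moreover have "(\<Sum>j\<in>J. P j) \<le> power_nonempty z"
    unfolding power_nonempty_def by (rule sum_P_mono) (use \<open>0 < z k\<close> in \<open>auto simp: J_def\<close>)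
  moreover have "power_from z (z k) = (\<Sum>j\<in>J. P j)"
    unfolding power_from_def J_def using \<open>0 < z k\<close> by (intro sum.cong) auto
  ultimately have "power_above z (z k) + power_at z (z k) \<le> served_level z s"
    using power_from_eq[OF \<open>0 < z k\<close>] by (simp add: served_level_def)
  then have "1 \<le> (served_level z s - power_above z (z k)) / power_at z (z k)"
    using power_at_pos[OF k(1), of z] by (simp add: field_simps)
  then show ?thesis
    using ggddf_rate_closed_loop[OF k(1) \<open>0 \<le> s\<close>] \<open>0 < z k\<close>
    by (simp add: z_def discharge_fraction_def)
qed

lemma ggddf_delivered_before_shortfall:
  assumes "0 \<le> T" "power_nonempty (durations T) < d T"
  shows "(\<Sum>i\<in>S. min (E0 i) (P i * T)) \<le> integral {0..T} (\<lambda>t. \<Sum>i\<in>S. ggddf_rate i t)"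
proof -
  have "min (E0 i) (P i * T) \<le> integral {0..T} (ggddf_rate i)" if i: "i \<in> S" for i
  proof (cases "0 < durations T i")
    case True
    have "integral {0..T} (ggddf_rate i) = integral {0..T} (\<lambda>_. P i)"
      using ggddf_rate_full_before_shortfall[OF assms i True] by (intro integral_cong) auto
    then show ?thesis using \<open>0 \<le> T\<close> by (simp add: mult.commute)
  next
    case False
    then have "durations T i = 0" using durations_nonneg[OF i \<open>0 \<le> T\<close>] by simp
    then show ?thesis using integral_unique[OF has_integral_ggddf_rate[OF i \<open>0 \<le> T\<close>]] by simp
  qed
  then show ?thesis
    using has_integral_ggddf_rate[OF _ \<open>0 \<le> T\<close>] finite_stores
    by (subst integral_sum) (auto intro: sum_mono)
qed

lemma ggddf_serves_before_shortfall:
  assumes "0 \<le> T" "power_nonempty (durations T) < d T" and d: "d integrable_on {0..T}"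
    and bound: "integral {0..T} d \<le> (\<Sum>i\<in>S. min (E0 i) (P i * T))"
  shows "AE t in lborel. t \<in> {0..T} \<longrightarrow> (\<Sum>i\<in>S. ggddf_rate i t) = d t"
proof -
  define h where "h t = d t - (\<Sum>i\<in>S. ggddf_rate i t)" for t
  have "(\<lambda>t. \<Sum>i\<in>S. ggddf_rate i t) integrable_on {0..T}"
    using has_integral_ggddf_rate[OF _ \<open>0 \<le> T\<close>] finite_stores by (intro integrable_sum) auto
  then have h_int: "h integrable_on {0..T}"
    and "integral {0..T} h = integral {0..T} d - integral {0..T} (\<lambda>t. \<Sum>i\<in>S. ggddf_rate i t)"
    unfolding h_def using d by (auto intro: integrable_diff integral_diff)
  then have "integral {0..T} h \<le> 0"
    using ggddf_delivered_before_shortfall[OF assms(1,2)] bound by simp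
  moreover have h_nonneg: "0 \<le> h t" if "t \<in> {0..T}" for t
    using sum_ggddf_rate[of t] that by (auto simp: h_def)
  ultimately have "integral {0..T} h = 0"
    using integral_nonneg[OF h_int] by force
  then have "AE t in lborel. t \<in> {0..T} \<longrightarrow> h t = 0"
    using AE_eq_0_if_integral_nonneg_eq_0[OF h_int h_nonneg] by simp
  then show ?thesis by eventually_elim (auto simp: h_def)
qed

lemma served_rate_ggddf_rate: "served_rate S eta ggddf_rate t = (\<Sum>i\<in>S. ggddf_rate i t)"
  by (rule served_rate_no_charging) (use ggddf_rate_bounds in blast)

lemma ggddf_cc_policy:
  assumes "\<And>i. i \<in> S \<Longrightarrow> E0 i \<le> cap i \<and> 0 \<le> P' i"
  shows "cc_policy S cap P P' eta E0 d ggddf_rate"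
  unfolding cc_policy_def
proof (intro conjI ballI allI impI)
  fix i assume i: "i \<in> S"
  show "set_borel_measurable lborel {0..} (ggddf_rate i)" by (rule ggddf_rate_measurable[OF i])
  fix t :: real assume t: "0 \<le> t"
  show "0 \<le> energy E0 ggddf_rate i t"
    using energy_ggddf_rate[OF i t] durations_nonneg[OF i t] P_pos[OF i] by simp
  have "0 \<le> integral {0..t} (ggddf_rate i)"
    using has_integral_ggddf_rate[OF i t] ggddf_rate_bounds[OF i] by (intro integral_nonneg) auto
  then show "energy E0 ggddf_rate i t \<le> cap i" using assms[OF i] by (simp add: energy_def)
  show "- P' i \<le> ggddf_rate i t" "ggddf_rate i t \<le> P i"
    using ggddf_rate_bounds[OF i, of t] assms[OF i] by auto
next
  fix t :: real assume "0 \<le> t"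
  then show "0 \<le> served_rate S eta ggddf_rate t" "served_rate S eta ggddf_rate t \<le> d t"
    using served_rate_ggddf_rate sum_ggddf_rate power_nonempty_nonneg d_nonneg by auto
qed

lemma ggddf_completely_serves:
  assumes "\<And>T. 0 \<le> T \<Longrightarrow> d integrable_on {0..T}"
    and "\<And>T. 0 \<le> T \<Longrightarrow> integral {0..T} d \<le> (\<Sum>i\<in>S. min (E0 i) (P i * T))"
  shows "completely_serves S eta d ggddf_rate"
proof -
  have "AE t in lborel. 0 \<le> t \<longrightarrow> (\<Sum>i\<in>S. ggddf_rate i t) = d t"
  proof (rule AE_nonneg_reals_from_exceptional_times)
    fix T assume "T \<in> {T. 0 \<le> T \<and> power_nonempty (durations T) < d T}"
    then show "AE t in lborel. t \<in> {0..T} \<longrightarrow> (\<Sum>i\<in>S. ggddf_rate i t) = d t"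
      using ggddf_serves_before_shortfall assms by blast
  next
    fix t :: real assume "0 \<le> t" "t \<notin> {T. 0 \<le> T \<and> power_nonempty (durations T) < d T}"
    then show "(\<Sum>i\<in>S. ggddf_rate i t) = d t" using sum_ggddf_rate by simp
  qed
  then show ?thesis unfolding completely_serves_def served_rate_ggddf_rate .
qed

end

theorem theorem2:
  fixes S :: "'i set" and cap P P' eta E0 :: "'i \<Rightarrow> real" and d :: "real \<Rightarrow> real"
  assumes "finite S"
    and "\<forall>i\<in>S. cap i > 0 \<and> P i > 0 \<and> P' i \<ge> 0 \<and> 0 < eta i \<and> eta i \<le> 1"
    and "\<forall>t\<ge>0. d t \<ge> 0"
    and "\<forall>t\<ge>0. d integrable_on {0..t}"
    and "\<forall>s t. 0 \<le> s \<and> s \<le> t \<longrightarrow> d t \<le> d s"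
    and "\<exists>r. cc_policy S cap P P' eta E0 d r \<and> completely_serves S eta d r"
  shows "\<exists>r. cc_policy S cap P P' eta E0 d r \<and> no_cross_charging S r \<and>
             is_ggddf S P E0 d r \<and> completely_serves S eta d r"
proof -
  obtain r where cc: "cc_policy S cap P P' eta E0 d r" and serves: "completely_serves S eta d r"
    using assms(6) by blast
  note E0_bounds = cc_policy_initial_energy[OF cc]
  interpret ggddf_run S P d E0
    using assms(1-3,5) E0_bounds by unfold_locales auto
  have "integral {0..T} d \<le> (\<Sum>i\<in>S. min (E0 i) (P i * T))" if "0 \<le> T" for T
    using cc_policy_delivered_bound[OF assms(1) _ cc serves] assms(2,4) that by simp
  then have "completely_serves S eta d ggddf_rate"
    using assms(4) by (intro ggddf_completely_serves) auto
  moreover have "cc_policy S cap P P' eta E0 d ggddf_rate"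
    using E0_bounds assms(2) by (intro ggddf_cc_policy) auto
  moreover have "no_cross_charging S ggddf_rate" "is_ggddf S P E0 d ggddf_rate"
    using ggddf_rate_bounds ggddf_at_ggddf_rate by (auto simp: no_cross_charging_def is_ggddf_def)
  ultimately show ?thesis by blast
qed

end
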